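(* Let $G=(V,E)$ be a finite simple graph of order $n$ and let $T=n-1$. If $(x,y,z)$ is an optimal solution of the integer program with the constraints of the Time Step Model $\mathrm{TSM}(G,T)$ and objective "minimize $\sum_{v\in V}x^0_v-\frac{1}{2T}\sum_{t\in[T]}z^t$", then $C=\{v\in V\colon x^0_v=1\}$ is a minimum zero forcing set of $G$ with $\mathrm{PT}(G)=\mathrm{pt}(G,C)=\sum_{t\in[T]}z^t$.
   Context: Zero forcing: under the standard color change rule a filled vertex $u$ can force a non-filled vertex $v$ if $v$ is the only non-filled neighbor of $u$; $C\subseteq V$ is a zero forcing set if, starting with $C$ filled and repeatedly forcing, all of $V$ becomes filled; a minimum zero forcing set is one of minimum size. The propagation time $\mathrm{pt}(G,C)$ is the smallest $t^*$ such that, starting from $C^{[0]}=C$ and setting $C^{[t]}=C^{[t-1]}\cup\{v\notin C^{[t-1]}\colon$ some $u\in C^{[t-1]}$ has $v$ as its only neighbor outside $C^{[t-1]}\}$, one has $C^{[t^*]}=V$ ($\infty$ if $C$ is not a zero forcing set). $\mathrm{PT}(G)=\max\{\mathrm{pt}(G,C)\colon C$ a minimum zero forcing set$\}$. $N(u)$ is the neighborhood of $u$ and $d(u)=|N(u)|$. Time Step Model constraints: $A$ is the set of arcs containing $(u,v)$ and $(v,u)$ for each edge $\{u,v\}$, $[T]=\{1,\dots,T\}$. Binary variables $x^t_v$ ($v\in V$, $t\in\{0,\dots,T\}$), $y^t_a$ ($a\in A$, $t\in[T]$), $z^t$ ($t\in[T]$), with constraints: (1) $x^0_v+\sum_{t\in[T]}\sum_{a=(u,v)\in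 A}y^t_a=1$ for all $v$; (2) $y^t_a\leq x^{t-1}_u$ for all $a=(u,v)\in A$, $t\in[T]$; (3) $y^t_a\leq x^{t-1}_w$ for all $a=(u,v)\in A$, $w\in N(u)\setminus\{v\}$, $t\in[T]$; (4) $x^t_v=x^{t-1}_v+\sum_{a=(u,v)\in A}y^t_a$ for all $v$, $t\in[T]$; (5) $x^{t-1}_u-x^{t-1}_v+\sum_{w\in N(u)\setminus\{v\}}x^{t-1}_w\leq\sum_{a=(w,v)\in A}y^t_a+d(u)-1$ for all $(u,v)\in A$, $t\in[T]$; (6) $\frac1n\sum_{v\in V}(x^t_v-x^{t-1}_v)-z^t\leq0$ for all $t\in[T]$; (7) $z^t-\sum_{v\in V}(x^t_v-x^{t-1}_v)\leq 0$ for all $t\in[T]$. *)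

theory Defs
  imports Main "HOL-Library.Extended_Nat"
begin

definition simple_graph :: "'a set \<Rightarrow> ('a \<Rightarrow> 'a \<Rightarrow> bool) \<Rightarrow> bool" where
  "simple_graph V E \<longleftrightarrow> finite V \<and> (\<forall>u v. E u v \<longrightarrow> u \<in> V \<and> v \<in> V)
     \<and> (\<forall>u v. E u v \<longrightarrow> E v u) \<and> (\<forall>u. \<not> E u u)"

definition nbhd :: "'a set \<Rightarrow> ('a \<Rightarrow> 'a \<Rightarrow> bool) \<Rightarrow> 'a \<Rightarrow> 'a set" where
  "nbhd V E u = {w \<in> V. E u w}"

definition deg :: "'a set \<Rightarrow> ('a \<Rightarrow> 'a \<Rightarrow> bool) \<Rightarrow> 'a \<Rightarrow> nat" where
  "deg V E u = card (nbhd V E u)"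

definition arcs :: "'a set \<Rightarrow> ('a \<Rightarrow> 'a \<Rightarrow> bool) \<Rightarrow> ('a \<times> 'a) set" where
  "arcs V E = {(u, v). u \<in> V \<and> v \<in> V \<and> E u v}"

inductive filled :: "'a set \<Rightarrow> ('a \<Rightarrow> 'a \<Rightarrow> bool) \<Rightarrow> 'a set \<Rightarrow> 'a \<Rightarrow> bool"
  for V E C where
  init: "v \<in> C \<Longrightarrow> filled V E C v"
| force: "filled V E C u \<Longrightarrow> v \<in> nbhd V E u \<Longrightarrow>
          (\<forall>w \<in> nbhd V E u - {v}. filled V E C w) \<Longrightarrow> filled V E C v"

definition zero_forcing_set :: "'a set \<Rightarrow> ('a \<Rightarrow> 'a \<Rightarrow> bool) \<Rightarrow> 'a set \<Rightarrow> bool" where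
  "zero_forcing_set V E C \<longleftrightarrow> C \<subseteq> V \<and> (\<forall>v \<in> V. filled V E C v)"

definition min_zero_forcing_set :: "'a set \<Rightarrow> ('a \<Rightarrow> 'a \<Rightarrow> bool) \<Rightarrow> 'a set \<Rightarrow> bool" where
  "min_zero_forcing_set V E C \<longleftrightarrow> zero_forcing_set V E C \<and>
     (\<forall>C'. zero_forcing_set V E C' \<longrightarrow> card C \<le> card C')"

definition prop_step :: "'a set \<Rightarrow> ('a \<Rightarrow> 'a \<Rightarrow> bool) \<Rightarrow> 'a set \<Rightarrow> 'a set" where
  "prop_step V E C = C \<union> {v. v \<notin> C \<and> (\<exists>u \<in> C. nbhd V E u - C = {v})}"

definition pt :: "'a set \<Rightarrow> ('a \<Rightarrow> 'a \<Rightarrow> bool) \<Rightarrow> 'a set \<Rightarrow> enat" where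
  "pt V E C = (if \<exists>t. (prop_step V E ^^ t) C = V
               then enat (LEAST t. (prop_step V E ^^ t) C = V) else \<infinity>)"

definition PT :: "'a set \<Rightarrow> ('a \<Rightarrow> 'a \<Rightarrow> bool) \<Rightarrow> enat" where
  "PT V E = Sup {pt V E C | C. min_zero_forcing_set V E C}"

definition tsm_feasible :: "'a set \<Rightarrow> ('a \<Rightarrow> 'a \<Rightarrow> bool) \<Rightarrow> nat \<Rightarrow>
    ('a \<Rightarrow> nat \<Rightarrow> real) \<Rightarrow> ('a \<times> 'a \<Rightarrow> nat \<Rightarrow> real) \<Rightarrow> (nat \<Rightarrow> real) \<Rightarrow> bool" where
  "tsm_feasible V E T x y z \<longleftrightarrow>
     (\<forall>v \<in> V. \<forall>t \<in> {0..T}. x v t \<in> {0, 1}) \<and>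
     (\<forall>a \<in> arcs V E. \<forall>t \<in> {1..T}. y a t \<in> {0, 1}) \<and>
     (\<forall>t \<in> {1..T}. z t \<in> {0, 1}) \<and>
     \<comment> \<open>(1)\<close>
     (\<forall>v \<in> V. x v 0 + (\<Sum>t \<in> {1..T}. \<Sum>u \<in> {u. (u, v) \<in> arcs V E}. y (u, v) t) = 1) \<and>
     \<comment> \<open>(2)\<close>
     (\<forall>(u, v) \<in> arcs V E. \<forall>t \<in> {1..T}. y (u, v) t \<le> x u (t - 1)) \<and>
     \<comment> \<open>(3)\<close>
     (\<forall>(u, v) \<in> arcs V E. \<forall>w \<in> nbhd V E u - {v}. \<forall>t \<in> {1..T}. y (u, v) t \<le> x w (t - 1)) \<and>
     \<comment> \<open>(4)\<close>
     (\<forall>v \<in> V. \<forall>t \<in> {1..T}.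
        x v t = x v (t - 1) + (\<Sum>u \<in> {u. (u, v) \<in> arcs V E}. y (u, v) t)) \<and>
     \<comment> \<open>(5)\<close>
     (\<forall>(u, v) \<in> arcs V E. \<forall>t \<in> {1..T}.
        x u (t - 1) - x v (t - 1) + (\<Sum>w \<in> nbhd V E u - {v}. x w (t - 1))
          \<le> (\<Sum>w \<in> {w. (w, v) \<in> arcs V E}. y (w, v) t) + real (deg V E u) - 1) \<and>
     \<comment> \<open>(6)\<close>
     (\<forall>t \<in> {1..T}. (1 / real (card V)) * (\<Sum>v \<in> V. x v t - x v (t - 1)) - z t \<le> 0) \<and>
     \<comment> \<open>(7)\<close>
     (\<forall>t \<in> {1..T}. z t - (\<Sum>v \<in> V. x v t - x v (t - 1)) \<le> 0)"

definition tsm_objective :: "'a set \<Rightarrow> nat \<Rightarrow>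
    ('a \<Rightarrow> nat \<Rightarrow> real) \<Rightarrow> (nat \<Rightarrow> real) \<Rightarrow> real" where
  "tsm_objective V T x z = (\<Sum>v \<in> V. x v 0) - (1 / (2 * real T)) * (\<Sum>t \<in> {1..T}. z t)"

definition tsm_optimal :: "'a set \<Rightarrow> ('a \<Rightarrow> 'a \<Rightarrow> bool) \<Rightarrow> nat \<Rightarrow>
    ('a \<Rightarrow> nat \<Rightarrow> real) \<Rightarrow> ('a \<times> 'a \<Rightarrow> nat \<Rightarrow> real) \<Rightarrow> (nat \<Rightarrow> real) \<Rightarrow> bool" where
  "tsm_optimal V E T x y z \<longleftrightarrow> tsm_feasible V E T x y z \<and>
     (\<forall>x' y' z'. tsm_feasible V E T x' y' z' \<longrightarrow>
        tsm_objective V T x z \<le> tsm_objective V T x' z')"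

end

theory Submission
  imports Defs
begin

(* A feasible solution of TSM(G,T) is the trace of parallel propagation from
   C = {v. x v 0 = 1}: by induction on t, x _ t is the indicator of C^[t]
   (stage V E C t below), because constraints (2)-(3) let an arc (u,v) carry flow
   only if u can force v, while (5) makes every vertex that can be forced at step t
   receive flow.  Constraint (1) then gives C^[T] = V, and (6)-(7) make z t the
   indicator of C^[t] <> C^[t-1], so the z t sum to pt(G,C).  Conversely every zero
   forcing set C has pt(G,C) <= n - |C| <= T and its propagation yields a feasible
   solution.  The objective is |C| - pt(G,C)/(2T) with pt(G,C) <= T, so it minimises
   |C| first and only then maximises pt(G,C). *)

section \<open>Parallel propagation\<close>

abbreviation stage :: "'a set \<Rightarrow> ('a \<Rightarrow> 'a \<Rightarrow> bool) \<Rightarrow> 'a set \<Rightarrow> nat \<Rightarrow> 'a set" where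
  "stage V E C t \<equiv> (prop_step V E ^^ t) C"

definition forces :: "'a set \<Rightarrow> ('a \<Rightarrow> 'a \<Rightarrow> bool) \<Rightarrow> 'a set \<Rightarrow> 'a \<Rightarrow> 'a \<Rightarrow> bool" where
  "forces V E X u v \<longleftrightarrow> u \<in> X \<and> nbhd V E u - X = {v}"

lemma forces_iff:
  "forces V E X u v \<longleftrightarrow> u \<in> X \<and> v \<in> nbhd V E u \<and> v \<notin> X \<and> nbhd V E u - {v} \<subseteq> X"
  by (auto simp: forces_def)

lemma mem_prop_step_iff: "v \<in> prop_step V E X \<longleftrightarrow> v \<in> X \<or> (\<exists>u. forces V E X u v)"
  by (auto simp: prop_step_def forces_def)

lemma subset_prop_step: "X \<subseteq> prop_step V E X"
  by (auto simp: prop_step_def)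

lemma prop_step_subset: "X \<subseteq> V \<Longrightarrow> prop_step V E X \<subseteq> V"
  by (auto simp: mem_prop_step_iff forces_iff nbhd_def)

lemma stage_subset: "C \<subseteq> V \<Longrightarrow> stage V E C t \<subseteq> V"
  by (induction t) (simp_all add: prop_step_subset)

lemma stage_mono: "s \<le> t \<Longrightarrow> stage V E C s \<subseteq> stage V E C t"
  by (rule lift_Suc_mono_le[where f = "stage V E C"]) (simp add: subset_prop_step)

lemma stage_eq_prop_step_pred: "1 \<le> t \<Longrightarrow> stage V E C t = prop_step V E (stage V E C (t - 1))"
  by (cases t) auto

lemma filled_if_mem_stage: "v \<in> stage V E C t \<Longrightarrow> filled V E C v"
proof (induction t arbitrary: v)
  case 0
  then show ?case by (simp add: filled.init)
next
  case (Suc t)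
  then consider "v \<in> stage V E C t" | u where "forces V E (stage V E C t) u v"
    by (auto simp: mem_prop_step_iff)
  then show ?case
  proof cases
    case 1
    then show ?thesis by (rule Suc.IH)
  next
    case 2
    then have "filled V E C u" "v \<in> nbhd V E u" "\<forall>w \<in> nbhd V E u - {v}. filled V E C w"
      by (auto simp: forces_iff intro: Suc.IH)
    then show ?thesis
      by (rule filled.force)
  qed
qed

lemma mem_if_filled_closed:
  assumes "filled V E C v" and "C \<subseteq> X" and "prop_step V E X = X"
  shows "v \<in> X"
  using assms
proof (induction rule: filled.induct)
  case (force u v)
  then have "v \<in> X \<or> forces V E X u v"
    by (auto simp: forces_iff)
  then show ?case
    using mem_prop_step_iff[of v V E X] force.prems(2) by auto
qed auto

lemma zero_forcing_set_if_stage_eq: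
  "C \<subseteq> V \<Longrightarrow> stage V E C t = V \<Longrightarrow> zero_forcing_set V E C"
  using filled_if_mem_stage[where V = V and E = E and C = C and t = t]
  by (auto simp: zero_forcing_set_def)

lemma stage_psubset_Suc:
  assumes "zero_forcing_set V E C" and "stage V E C t \<noteq> V"
  shows "stage V E C t \<subset> stage V E C (Suc t)"
proof -
  have CV: "C \<subseteq> V" and filled: "\<forall>v \<in> V. filled V E C v"
    using assms(1) by (auto simp: zero_forcing_set_def)
  have "prop_step V E (stage V E C t) \<noteq> stage V E C t"
  proof
    assume closed: "prop_step V E (stage V E C t) = stage V E C t"
    have "C \<subseteq> stage V E C t"
      using stage_mono[of 0 t V E C] by simp
    then have "V \<subseteq> stage V E C t"
      using filled mem_if_filled_closed[OF _ _ closed] by blast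
    with assms(2) stage_subset[OF CV] show False by blast
  qed
  then show ?thesis
    using subset_prop_step[of "stage V E C t" V E] by (simp add: psubset_eq)
qed

lemma card_stage_ge:
  assumes "finite V" and "zero_forcing_set V E C"
  shows "stage V E C t = V \<or> card C + t \<le> card (stage V E C t)"
proof (induction t)
  case (Suc t)
  have CV: "C \<subseteq> V"
    using assms(2) by (simp add: zero_forcing_set_def)
  show ?case
  proof (cases "stage V E C t = V")
    case True
    then show ?thesis
      using prop_step_subset[of V V E] subset_prop_step[of V V E] by auto
  next
    case False
    have "finite (stage V E C (Suc t))"
      using finite_subset[OF stage_subset[OF CV] assms(1)] .
    then have "card (stage V E C t) < card (stage V E C (Suc t))"
      using psubset_card_mono stage_psubset_Suc[OF assms(2) False] by blast
    with Suc.IH False show ?thesis by simp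
  qed
qed simp

lemma stage_card_diff_eq:
  assumes "finite V" and "zero_forcing_set V E C"
  shows "stage V E C (card V - card C) = V"
proof -
  have CV: "C \<subseteq> V"
    using assms(2) by (simp add: zero_forcing_set_def)
  have "card (stage V E C (card V - card C)) \<le> card V" "card C \<le> card V"
    using card_mono[OF assms(1) stage_subset[OF CV]] card_mono[OF assms(1) CV] by auto
  moreover have "card (stage V E C (card V - card C)) = card V \<Longrightarrow> ?thesis"
    using card_subset_eq[OF assms(1) stage_subset[OF CV]] .
  ultimately show ?thesis
    using card_stage_ge[OF assms, of "card V - card C"] by linarith
qed

definition prop_time :: "'a set \<Rightarrow> ('a \<Rightarrow> 'a \<Rightarrow> bool) \<Rightarrow> 'a set \<Rightarrow> nat" where
  "prop_time V E C = (LEAST t. stage V E C t = V)"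

context
  fixes V :: "'a set" and E :: "'a \<Rightarrow> 'a \<Rightarrow> bool" and C :: "'a set"
  assumes finite: "finite V" and zfs: "zero_forcing_set V E C"
begin

lemma stage_prop_time: "stage V E C (prop_time V E C) = V"
  unfolding prop_time_def using stage_card_diff_eq[OF finite zfs] by (rule LeastI)

lemma prop_time_le_card_diff: "prop_time V E C \<le> card V - card C"
  unfolding prop_time_def using stage_card_diff_eq[OF finite zfs] by (rule Least_le)

lemma pt_eq_prop_time: "pt V E C = enat (prop_time V E C)"
  using stage_prop_time by (auto simp: pt_def prop_time_def)

lemma stage_eq_iff_prop_time_le: "stage V E C t = V \<longleftrightarrow> prop_time V E C \<le> t"
proof
  assume "stage V E C t = V"
  then show "prop_time V E C \<le> t"
    unfolding prop_time_def by (rule Least_le)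
next
  assume "prop_time V E C \<le> t"
  then show "stage V E C t = V"
    using stage_mono[of "prop_time V E C" t V E C] stage_prop_time
      stage_subset[where C = C and V = V and E = E and t = t] zfs
    by (auto simp: zero_forcing_set_def)
qed

lemma stage_Suc_neq_iff: "stage V E C (Suc t) \<noteq> stage V E C t \<longleftrightarrow> t < prop_time V E C"
proof
  assume "stage V E C (Suc t) \<noteq> stage V E C t"
  then have "stage V E C t \<noteq> V"
    using prop_step_subset[of V V E] subset_prop_step[of V V E] by auto
  then show "t < prop_time V E C"
    using stage_eq_iff_prop_time_le by simp
next
  assume "t < prop_time V E C"
  then have "stage V E C t \<noteq> V"
    using stage_eq_iff_prop_time_le by simp
  then show "stage V E C (Suc t) \<noteq> stage V E C t"
    using stage_psubset_Suc[OF zfs] by blast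
qed

lemma prop_time_le_card_minus_1: "prop_time V E C \<le> card V - 1"
proof (cases "V = {}")
  case True
  then show ?thesis
    using stage_eq_iff_prop_time_le[of 0] zfs by (simp add: zero_forcing_set_def)
next
  case False
  have "stage V E {} t = {}" for t
    by (induction t) (simp_all add: prop_step_def)
  then have "C \<noteq> {}"
    using stage_prop_time False by metis
  then have "card C \<ge> 1"
    using zfs finite by (auto simp: zero_forcing_set_def Suc_le_eq card_gt_0_iff finite_subset)
  then show ?thesis
    using prop_time_le_card_diff by linarith
qed

lemma card_stage_changes:
  assumes "prop_time V E C \<le> T"
  shows "(\<Sum>t \<in> {1..T}. of_bool (stage V E C t \<noteq> stage V E C (t - 1)) :: real)
    = real (prop_time V E C)"
proof -
  have "stage V E C t \<noteq> stage V E C (t - 1) \<longleftrightarrow> t \<le> prop_time V E C" if "1 \<le> t" for t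
    using stage_Suc_neq_iff[of "t - 1"] that by (cases t) auto
  then have "(\<Sum>t \<in> {1..T}. of_bool (stage V E C t \<noteq> stage V E C (t - 1)) :: real)
      = (\<Sum>t \<in> {1..T}. of_bool (t \<le> prop_time V E C))"
    by (intro sum.cong) auto
  also have "\<dots> = real (card ({1..T} \<inter> {t. t \<le> prop_time V E C}))"
    by simp
  also have "{1..T} \<inter> {t. t \<le> prop_time V E C} = {1..prop_time V E C}"
    using assms by auto
  finally show ?thesis by simp
qed

end

section \<open>Feasible solutions are propagation traces\<close>

lemma arcs_iff: "(u, v) \<in> arcs V E \<longleftrightarrow> u \<in> V \<and> v \<in> nbhd V E u"
  by (auto simp: arcs_def nbhd_def)

lemma nbhd_subset: "nbhd V E u \<subseteq> V"
  by (auto simp: nbhd_def)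

lemma sum_of_bool_diff:
  assumes "finite V" and "A \<subseteq> B"
  shows "(\<Sum>v \<in> V. of_bool (v \<in> B) - of_bool (v \<in> A) :: real) = real (card (V \<inter> (B - A)))"
proof -
  have "(\<Sum>v \<in> V. of_bool (v \<in> B) - of_bool (v \<in> A) :: real) = (\<Sum>v \<in> V. of_bool (v \<in> B - A))"
    using assms(2) by (intro sum.cong) auto
  then show ?thesis
    using assms(1) by (simp add: Int_def)
qed

(* The left-hand side of constraint (5) at the indicator of X. *)
lemma force_count_eq_deg:
  assumes "finite V" and "forces V E X u v"
  shows "of_bool (u \<in> X) - of_bool (v \<in> X) + (\<Sum>w \<in> nbhd V E u - {v}. of_bool (w \<in> X))
    = real (deg V E u)"
proof -
  have fin: "finite (nbhd V E u)"
    using finite_subset[OF nbhd_subset assms(1)] .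
  have "u \<in> X" "v \<in> nbhd V E u" "v \<notin> X" "nbhd V E u - {v} \<subseteq> X"
    using assms(2) by (auto simp: forces_iff)
  moreover from this have "deg V E u \<ge> 1"
    using fin by (auto simp: deg_def Suc_le_eq card_gt_0_iff)
  ultimately show ?thesis
    using fin by (simp add: deg_def Int_absorb2 Int_def[symmetric])
qed

lemma force_count_le_deg:
  assumes "finite V" and "v \<in> nbhd V E u" and "\<not> forces V E X u v"
  shows "of_bool (u \<in> X) - of_bool (v \<in> X) + (\<Sum>w \<in> nbhd V E u - {v}. of_bool (w \<in> X))
    \<le> real (deg V E u) - 1"
proof -
  let ?N = "nbhd V E u - {v}"
  have fin_nbhd: "finite (nbhd V E u)"
    using finite_subset[OF nbhd_subset assms(1)] .
  then have fin: "finite ?N"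
    by blast
  have "deg V E u \<ge> 1"
    using assms(2) fin_nbhd by (auto simp: deg_def Suc_le_eq card_gt_0_iff)
  then have card_N: "real (card ?N) = real (deg V E u) - 1"
    using assms(2) by (simp add: deg_def)
  have sum_N: "(\<Sum>w \<in> ?N. of_bool (w \<in> X) :: real) = real (card (?N \<inter> X))"
    using fin by (simp add: Int_def)
  have "card (?N \<inter> X) \<le> card ?N"
    using fin by (simp add: card_mono)
  show ?thesis
  proof (cases "?N \<subseteq> X")
    case True
    then have "u \<notin> X \<or> v \<in> X"
      using assms(2,3) by (auto simp: forces_iff)
    then show ?thesis
      using sum_N card_N \<open>card (?N \<inter> X) \<le> card ?N\<close> by auto
  next
    case False
    then have "card (?N \<inter> X) < card ?N"
      using fin by (intro psubset_card_mono) auto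
    then show ?thesis
      using sum_N card_N by auto
  qed
qed

lemma tsm_objective_eq:
  assumes "finite V" and "zero_forcing_set V E C" and "prop_time V E C \<le> T"
    and "\<forall>v \<in> V. x v 0 = of_bool (v \<in> C)"
    and "\<forall>t \<in> {1..T}. z t = of_bool (stage V E C t \<noteq> stage V E C (t - 1))"
  shows "tsm_objective V T x z = real (card C) - 1 / (2 * real T) * real (prop_time V E C)"
proof -
  have "C \<subseteq> V"
    using assms(2) by (simp add: zero_forcing_set_def)
  then have "(\<Sum>v \<in> V. x v 0) = real (card C)"
    using assms(1,4) by (simp add: Int_absorb1 Int_def[symmetric])
  moreover have "(\<Sum>t \<in> {1..T}. z t) = real (prop_time V E C)"
    using card_stage_changes[OF assms(1-3)] assms(5) by simp
  ultimately show ?thesis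
    by (simp add: tsm_objective_def)
qed

abbreviation inflow :: "'a set \<Rightarrow> ('a \<Rightarrow> 'a \<Rightarrow> bool) \<Rightarrow> ('a \<times> 'a \<Rightarrow> nat \<Rightarrow> real) \<Rightarrow> 'a \<Rightarrow> nat \<Rightarrow> real"
  where "inflow V E y v t \<equiv> \<Sum>u \<in> {u. (u, v) \<in> arcs V E}. y (u, v) t"

locale tsm_solution =
  fixes V :: "'a set" and E :: "'a \<Rightarrow> 'a \<Rightarrow> bool" and T :: nat
    and x :: "'a \<Rightarrow> nat \<Rightarrow> real" and y :: "'a \<times> 'a \<Rightarrow> nat \<Rightarrow> real" and z :: "nat \<Rightarrow> real"
  assumes finite_V: "finite V" and feasible: "tsm_feasible V E T x y z"
begin

lemma x_binary: "v \<in> V \<Longrightarrow> t \<le> T \<Longrightarrow> x v t \<in> {0, 1}"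
  using feasible unfolding tsm_feasible_def by simp

lemma y_binary: "(u, v) \<in> arcs V E \<Longrightarrow> t \<in> {1..T} \<Longrightarrow> y (u, v) t \<in> {0, 1}"
  using feasible unfolding tsm_feasible_def by blast

lemma z_binary: "t \<in> {1..T} \<Longrightarrow> z t \<in> {0, 1}"
  using feasible unfolding tsm_feasible_def by blast

lemma filled_once: "v \<in> V \<Longrightarrow> x v 0 + (\<Sum>t \<in> {1..T}. inflow V E y v t) = 1"
  using feasible unfolding tsm_feasible_def by blast

lemma y_le_x_tail: "(u, v) \<in> arcs V E \<Longrightarrow> t \<in> {1..T} \<Longrightarrow> y (u, v) t \<le> x u (t - 1)"
  using feasible unfolding tsm_feasible_def by blast

lemma y_le_x_nbhd:
  "(u, v) \<in> arcs V E \<Longrightarrow> w \<in> nbhd V E u - {v} \<Longrightarrow> t \<in> {1..T} \<Longrightarrow> y (u, v) t \<le> x w (t - 1)"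
  using feasible unfolding tsm_feasible_def by blast

lemma x_step: "v \<in> V \<Longrightarrow> t \<in> {1..T} \<Longrightarrow> x v t = x v (t - 1) + inflow V E y v t"
  using feasible unfolding tsm_feasible_def by blast

lemma force_constraint:
  "(u, v) \<in> arcs V E \<Longrightarrow> t \<in> {1..T} \<Longrightarrow>
    x u (t - 1) - x v (t - 1) + (\<Sum>w \<in> nbhd V E u - {v}. x w (t - 1))
      \<le> inflow V E y v t + real (deg V E u) - 1"
  using feasible unfolding tsm_feasible_def by blast

lemma z_lower: "t \<in> {1..T} \<Longrightarrow> (1 / real (card V)) * (\<Sum>v \<in> V. x v t - x v (t - 1)) \<le> z t"
  using feasible unfolding tsm_feasible_def by fastforce

lemma z_upper: "t \<in> {1..T} \<Longrightarrow> z t \<le> (\<Sum>v \<in> V. x v t - x v (t - 1))"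
  using feasible unfolding tsm_feasible_def by fastforce

lemma inflow_nonneg: "t \<in> {1..T} \<Longrightarrow> 0 \<le> inflow V E y v t"
  using y_binary by (intro sum_nonneg) fastforce

abbreviation initial_set :: "'a set" where
  "initial_set \<equiv> {v \<in> V. x v 0 = 1}"

lemma used_arc_forces:
  assumes "Suc t \<le> T" and x_t: "\<forall>w \<in> V. x w t = of_bool (w \<in> S)"
    and "(u, v) \<in> arcs V E" and "y (u, v) (Suc t) \<noteq> 0" and "v \<notin> S"
  shows "forces V E S u v"
proof -
  have t: "Suc t \<in> {1..T}"
    using assms(1) by simp
  have y: "y (u, v) (Suc t) = 1"
    using y_binary[OF assms(3) t] assms(4) by simp
  have "u \<in> V" "v \<in> nbhd V E u"
    using assms(3) by (auto simp: arcs_iff)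
  moreover have "u \<in> S"
  proof -
    have "1 \<le> x u t"
      using y_le_x_tail[OF assms(3) t] y by simp
    then show ?thesis
      using x_t \<open>u \<in> V\<close> by (cases "u \<in> S") simp_all
  qed
  moreover have "w \<in> S" if "w \<in> nbhd V E u - {v}" for w
  proof -
    have "1 \<le> x w t"
      using y_le_x_nbhd[OF assms(3) that t] y by simp
    then show ?thesis
      using x_t nbhd_subset[of V E u] that by (cases "w \<in> S") auto
  qed
  ultimately show ?thesis
    using assms(5) by (auto simp: forces_iff)
qed

lemma forced_inflow:
  assumes "Suc t \<le> T" and x_t: "\<forall>w \<in> V. x w t = of_bool (w \<in> S)"
    and "S \<subseteq> V" and forces: "forces V E S u v"
  shows "1 \<le> inflow V E y v (Suc t)"
proof -
  have t: "Suc t \<in> {1..T}"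
    using assms(1) by simp
  have "u \<in> V" "v \<in> nbhd V E u"
    using forces assms(3) by (auto simp: forces_iff)
  then have arc: "(u, v) \<in> arcs V E"
    by (simp add: arcs_iff)
  have "(\<Sum>w \<in> nbhd V E u - {v}. x w t) = (\<Sum>w \<in> nbhd V E u - {v}. of_bool (w \<in> S))"
    using x_t nbhd_subset[of V E u] by (intro sum.cong) auto
  then have "x u t - x v t + (\<Sum>w \<in> nbhd V E u - {v}. x w t) = real (deg V E u)"
    using force_count_eq_deg[OF finite_V forces] x_t \<open>u \<in> V\<close> \<open>v \<in> nbhd V E u\<close>
      nbhd_subset[of V E u] by auto
  then show ?thesis
    using force_constraint[OF arc t] by simp
qed


lemma stage_initial_set_subset: "stage V E initial_set t \<subseteq> V"
  by (rule stage_subset) blast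

lemma x_Suc_eq_prop_step:
  assumes t: "Suc t \<le> T" and x_t: "\<forall>w \<in> V. x w t = of_bool (w \<in> S)"
    and "S \<subseteq> V" and v: "v \<in> V"
  shows "x v (Suc t) = of_bool (v \<in> prop_step V E S)"
proof -
  have step: "x v (Suc t) = x v t + inflow V E y v (Suc t)"
    using x_step[OF v, of "Suc t"] t by simp
  have binary: "x v (Suc t) \<in> {0, 1}" and nonneg: "0 \<le> inflow V E y v (Suc t)"
    using x_binary[OF v t] inflow_nonneg[of "Suc t" v] t by auto
  consider (old) "v \<in> S" | (forced) u where "v \<notin> S" "forces V E S u v"
    | (unfilled) "v \<notin> prop_step V E S"
    by (auto simp: mem_prop_step_iff)
  then show ?thesis
  proof cases
    case old
    then show ?thesis
      using step x_t v binary nonneg subset_prop_step[of S V E] by auto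
  next
    case forced
    then show ?thesis
      using step x_t v binary forced_inflow[OF t x_t \<open>S \<subseteq> V\<close> forced(2)]
      by (auto simp: mem_prop_step_iff)
  next
    case unfilled
    then have "y (u, v) (Suc t) = 0" if "(u, v) \<in> arcs V E" for u
      using used_arc_forces[OF t x_t that] subset_prop_step[of S V E]
      by (auto simp: mem_prop_step_iff)
    then have "inflow V E y v (Suc t) = 0"
      by simp
    then show ?thesis
      using step x_t v unfilled subset_prop_step[of S V E] by auto
  qed
qed

lemma x_eq_stage: "t \<le> T \<Longrightarrow> \<forall>v \<in> V. x v t = of_bool (v \<in> stage V E initial_set t)"
proof (induction t)
  case 0
  show ?case
    using x_binary by fastforce
next
  case (Suc t)
  then show ?case
    using x_Suc_eq_prop_step[OF Suc.prems _ stage_initial_set_subset] by simp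
qed

lemma stage_T_eq: "stage V E initial_set T = V"
proof -
  have "v \<in> stage V E initial_set T" if v: "v \<in> V" for v
  proof -
    have "x v T - x v 0 = (\<Sum>t \<in> {Suc 0..T}. x v t - x v (t - 1))"
      using sum_telescope''[where m = 0 and n = T and f = "x v"] by simp
    also have "\<dots> = (\<Sum>t \<in> {1..T}. inflow V E y v t)"
      using x_step[OF v] by (intro sum.cong) auto
    finally have "x v T = 1"
      using filled_once[OF v] by simp
    then show ?thesis
      using x_eq_stage[of T] v by (cases "v \<in> stage V E initial_set T") auto
  qed
  then show ?thesis
    using stage_initial_set_subset by blast
qed

lemma zero_forcing_initial_set: "zero_forcing_set V E initial_set"
  by (rule zero_forcing_set_if_stage_eq[OF _ stage_T_eq]) blast

lemma prop_time_initial_set_le: "prop_time V E initial_set \<le> T"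
  using stage_eq_iff_prop_time_le[OF finite_V zero_forcing_initial_set] stage_T_eq by blast

lemma z_eq_stage_changed:
  assumes t: "t \<in> {1..T}"
  shows "z t = of_bool (stage V E initial_set t \<noteq> stage V E initial_set (t - 1))"
proof -
  let ?S = "stage V E initial_set"
  have "?S (t - 1) \<subseteq> ?S t"
    by (rule stage_mono) simp
  have "(\<Sum>v \<in> V. x v t - x v (t - 1)) = (\<Sum>v \<in> V. of_bool (v \<in> ?S t) - of_bool (v \<in> ?S (t - 1)))"
    using x_eq_stage[of t] x_eq_stage[of "t - 1"] t by (intro sum.cong) auto
  also have "\<dots> = real (card (V \<inter> (?S t - ?S (t - 1))))"
    by (rule sum_of_bool_diff[OF finite_V \<open>?S (t - 1) \<subseteq> ?S t\<close>])
  also have "V \<inter> (?S t - ?S (t - 1)) = ?S t - ?S (t - 1)"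
    using stage_initial_set_subset by blast
  finally have sum_eq: "(\<Sum>v \<in> V. x v t - x v (t - 1)) = real (card (?S t - ?S (t - 1)))" .
  show ?thesis
  proof (cases "?S t = ?S (t - 1)")
    case True
    then show ?thesis
      using z_upper[OF t] z_binary[OF t] sum_eq by auto
  next
    case False
    have fin: "finite (?S t - ?S (t - 1))"
      using finite_subset[OF stage_initial_set_subset finite_V] by blast
    then have "0 < card (?S t - ?S (t - 1))"
      using False \<open>?S (t - 1) \<subseteq> ?S t\<close> by (auto simp: card_gt_0_iff)
    moreover have "0 < card V"
      using False finite_V stage_initial_set_subset[of t] \<open>?S (t - 1) \<subseteq> ?S t\<close>
      by (auto simp: card_gt_0_iff)
    ultimately have "0 < real (card (?S t - ?S (t - 1))) / real (card V)"
      by simp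
    then have "0 < z t"
      using z_lower[OF t] sum_eq by simp
    then show ?thesis
      using z_binary[OF t] False by auto
  qed
qed

lemma sum_z_eq_prop_time: "(\<Sum>t \<in> {1..T}. z t) = real (prop_time V E initial_set)"
  using card_stage_changes[OF finite_V zero_forcing_initial_set prop_time_initial_set_le]
    z_eq_stage_changed by simp

lemma objective_eq:
  "tsm_objective V T x z = real (card initial_set) - 1 / (2 * real T) * real (prop_time V E initial_set)"
  using z_eq_stage_changed
  by (intro tsm_objective_eq[where x = x and z = z, OF finite_V zero_forcing_initial_set prop_time_initial_set_le
        x_eq_stage[OF le0, unfolded funpow_0]]) blast

end

section \<open>Propagation traces are feasible solutions\<close>

definition forcer :: "'a set \<Rightarrow> ('a \<Rightarrow> 'a \<Rightarrow> bool) \<Rightarrow> 'a set \<Rightarrow> 'a \<Rightarrow> 'a" where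
  "forcer V E X v = (SOME u. forces V E X u v)"

lemma forces_forcer: "v \<in> prop_step V E X \<Longrightarrow> v \<notin> X \<Longrightarrow> forces V E X (forcer V E X v) v"
  unfolding forcer_def by (rule someI_ex) (auto simp: mem_prop_step_iff)

definition stage_x :: "'a set \<Rightarrow> ('a \<Rightarrow> 'a \<Rightarrow> bool) \<Rightarrow> 'a set \<Rightarrow> 'a \<Rightarrow> nat \<Rightarrow> real" where
  "stage_x V E C v t = of_bool (v \<in> stage V E C t)"

definition stage_y :: "'a set \<Rightarrow> ('a \<Rightarrow> 'a \<Rightarrow> bool) \<Rightarrow> 'a set \<Rightarrow> 'a \<times> 'a \<Rightarrow> nat \<Rightarrow> real" where
  "stage_y V E C a t = of_bool (snd a \<in> stage V E C t - stage V E C (t - 1)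
     \<and> fst a = forcer V E (stage V E C (t - 1)) (snd a))"

definition stage_z :: "'a set \<Rightarrow> ('a \<Rightarrow> 'a \<Rightarrow> bool) \<Rightarrow> 'a set \<Rightarrow> nat \<Rightarrow> real" where
  "stage_z V E C t = of_bool (stage V E C t \<noteq> stage V E C (t - 1))"

context
  fixes V :: "'a set" and E :: "'a \<Rightarrow> 'a \<Rightarrow> bool" and C :: "'a set"
  assumes finite: "finite V" and C_V: "C \<subseteq> V"
begin

lemma forces_by_forcer:
  assumes "1 \<le> t" and "v \<in> stage V E C t - stage V E C (t - 1)"
  shows "forces V E (stage V E C (t - 1)) (forcer V E (stage V E C (t - 1)) v) v"
  using assms by (intro forces_forcer) (auto simp: stage_eq_prop_step_pred)

lemma inflow_stage_y:
  assumes "1 \<le> t"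
  shows "inflow V E (stage_y V E C) v t = of_bool (v \<in> stage V E C t - stage V E C (t - 1))"
proof (cases "v \<in> stage V E C t - stage V E C (t - 1)")
  case True
  let ?u = "forcer V E (stage V E C (t - 1)) v"
  have "?u \<in> V" "v \<in> nbhd V E ?u"
    using forces_by_forcer[OF assms True] stage_subset[OF C_V] by (auto simp: forces_iff)
  then have "{u. (u, v) \<in> arcs V E} \<inter> {u. u = ?u} = {?u}"
    by (auto simp: arcs_iff)
  moreover have "finite {u. (u, v) \<in> arcs V E}"
    using finite by (rule rev_finite_subset) (auto simp: arcs_iff)
  ultimately show ?thesis
    using True by (simp add: stage_y_def)
next
  case False
  then have "stage_y V E C (u, v) t = 0" for u
    by (simp add: stage_y_def)
  with False show ?thesis
    by simp
qed

lemma sum_stage_x_diff: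
  "(\<Sum>v \<in> V. stage_x V E C v t - stage_x V E C v (t - 1))
    = real (card (stage V E C t - stage V E C (t - 1)))"
proof -
  have "stage V E C (t - 1) \<subseteq> stage V E C t"
    by (rule stage_mono) simp
  then have "(\<Sum>v \<in> V. stage_x V E C v t - stage_x V E C v (t - 1))
      = real (card (V \<inter> (stage V E C t - stage V E C (t - 1))))"
    unfolding stage_x_def by (rule sum_of_bool_diff[OF finite])
  also have "V \<inter> (stage V E C t - stage V E C (t - 1)) = stage V E C t - stage V E C (t - 1)"
    using stage_subset[OF C_V] by blast
  finally show ?thesis .
qed

lemma stage_force_constraint:
  assumes "1 \<le> t" and arc: "(u, v) \<in> arcs V E"
  shows "stage_x V E C u (t - 1) - stage_x V E C v (t - 1)
      + (\<Sum>w \<in> nbhd V E u - {v}. stage_x V E C w (t - 1))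
    \<le> inflow V E (stage_y V E C) v t + real (deg V E u) - 1"
proof (cases "forces V E (stage V E C (t - 1)) u v")
  case True
  then have "v \<in> stage V E C t - stage V E C (t - 1)"
    using assms(1) by (auto simp: stage_eq_prop_step_pred mem_prop_step_iff forces_iff)
  then show ?thesis
    using force_count_eq_deg[OF finite True] inflow_stage_y[OF assms(1)]
    by (simp add: stage_x_def)
next
  case False
  have "v \<in> nbhd V E u"
    using arc by (simp add: arcs_iff)
  moreover have "0 \<le> inflow V E (stage_y V E C) v t"
    unfolding stage_y_def by (intro sum_nonneg) simp
  ultimately show ?thesis
    using force_count_le_deg[OF finite _ False] unfolding stage_x_def by linarith
qed

lemma stage_filled_once:
  assumes "stage V E C T = V" and "v \<in> V"
  shows "stage_x V E C v 0 + (\<Sum>t \<in> {1..T}. inflow V E (stage_y V E C) v t) = 1"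
proof -
  have "(\<Sum>t \<in> {1..T}. inflow V E (stage_y V E C) v t)
      = (\<Sum>t \<in> {Suc 0..T}. stage_x V E C v t - stage_x V E C v (t - 1))"
    using stage_mono[of "t - 1" t V E C for t]
    by (intro sum.cong) (auto simp: inflow_stage_y stage_x_def)
  also have "\<dots> = stage_x V E C v T - stage_x V E C v 0"
    by (rule sum_telescope'') simp
  finally show ?thesis
    using assms by (simp add: stage_x_def)
qed

lemma stage_z_bounds:
  "1 / real (card V) * (\<Sum>v \<in> V. stage_x V E C v t - stage_x V E C v (t - 1)) \<le> stage_z V E C t"
  "stage_z V E C t \<le> (\<Sum>v \<in> V. stage_x V E C v t - stage_x V E C v (t - 1))"
proof -
  let ?N = "stage V E C t - stage V E C (t - 1)"
  have "finite ?N"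
    using finite_subset[OF stage_subset[OF C_V] finite] by blast
  moreover have "?N \<noteq> {} \<longleftrightarrow> stage V E C t \<noteq> stage V E C (t - 1)"
    using stage_mono[of "t - 1" t V E C] by auto
  ultimately have "1 \<le> card ?N \<longleftrightarrow> stage V E C t \<noteq> stage V E C (t - 1)"
    by (simp add: Suc_le_eq card_gt_0_iff)
  moreover have "card ?N \<le> card V"
    using finite stage_subset[OF C_V] by (intro card_mono) auto
  ultimately show
    "1 / real (card V) * (\<Sum>v \<in> V. stage_x V E C v t - stage_x V E C v (t - 1)) \<le> stage_z V E C t"
    "stage_z V E C t \<le> (\<Sum>v \<in> V. stage_x V E C v t - stage_x V E C v (t - 1))"
    unfolding sum_stage_x_diff stage_z_def
    by (cases "stage V E C t = stage V E C (t - 1)"; simp add: divide_le_eq_1)+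
qed

lemma tsm_feasible_stage:
  assumes "stage V E C T = V"
  shows "tsm_feasible V E T (stage_x V E C) (stage_y V E C) (stage_z V E C)"
  unfolding tsm_feasible_def
proof (intro conjI ballI; clarify?)
  fix u v t assume "(u, v) \<in> arcs V E" "t \<in> {1..T}"
  then show "stage_y V E C (u, v) t \<le> stage_x V E C u (t - 1)"
    using forces_by_forcer[of t v] by (auto simp: stage_y_def stage_x_def forces_iff)
next
  fix u v w t assume "(u, v) \<in> arcs V E" "w \<in> nbhd V E u" "w \<noteq> v" "t \<in> {1..T}"
  then show "stage_y V E C (u, v) t \<le> stage_x V E C w (t - 1)"
    using forces_by_forcer[of t v] by (auto simp: stage_y_def stage_x_def forces_iff)
next
  fix v t assume "v \<in> V" "t \<in> {1..T}"
  then show "stage_x V E C v t = stage_x V E C v (t - 1) + inflow V E (stage_y V E C) v t"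
    using stage_mono[of "t - 1" t V E C] by (auto simp: inflow_stage_y stage_x_def)
next
  fix u v t assume "(u, v) \<in> arcs V E" "t \<in> {1..T}"
  then show "stage_x V E C u (t - 1) - stage_x V E C v (t - 1)
      + (\<Sum>w \<in> nbhd V E u - {v}. stage_x V E C w (t - 1))
    \<le> inflow V E (stage_y V E C) v t + real (deg V E u) - 1"
    by (intro stage_force_constraint) auto
qed (use assms stage_filled_once stage_z_bounds in \<open>auto simp: stage_x_def stage_y_def stage_z_def\<close>)

end

section \<open>Optimal solutions\<close>

lemma lex_le_of_objective_le:
  fixes c c' p p' T :: nat
  assumes "p \<le> T" and "p' \<le> T"
    and le: "real c - 1 / (2 * real T) * real p \<le> real c' - 1 / (2 * real T) * real p'"
  shows "c \<le> c'" and "c = c' \<Longrightarrow> p' \<le> p"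
proof -
  have "c \<le> c' \<and> (c = c' \<longrightarrow> p' \<le> p)"
  proof (cases "T = 0")
    case True
    then show ?thesis
      using assms by simp
  next
    case False
    then have T: "0 < real T"
      by simp
    have "2 * real T * (real c - 1 / (2 * real T) * real p)
        \<le> 2 * real T * (real c' - 1 / (2 * real T) * real p')"
      using le T by (intro mult_left_mono) auto
    then have scaled: "2 * real T * real c - real p \<le> 2 * real T * real c' - real p'"
      using T by (simp add: algebra_simps)
    have "c \<le> c'"
    proof (rule ccontr)
      assume "\<not> c \<le> c'"
      then have "2 * real T * (real c' + 1) \<le> 2 * real T * real c"
        using T by (intro mult_left_mono) auto
      then show False
        using scaled assms(1,2) T by (simp add: algebra_simps)
    qed
    then show ?thesis
      using scaled by auto
  qed
  then show "c \<le> c'" and "c = c' \<Longrightarrow> p' \<le> p"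
    by auto
qed

lemma PT_eq_pt_if_slowest:
  assumes "finite V" and min: "min_zero_forcing_set V E C"
    and slowest: "\<And>C'. min_zero_forcing_set V E C' \<Longrightarrow> prop_time V E C' \<le> prop_time V E C"
  shows "PT V E = pt V E C"
  unfolding PT_def
proof (rule cSup_eq_maximum)
  show "pt V E C \<in> {pt V E C' |C'. min_zero_forcing_set V E C'}"
    using min by blast
next
  fix e assume "e \<in> {pt V E C' |C'. min_zero_forcing_set V E C'}"
  then obtain C' where "min_zero_forcing_set V E C'" and "e = pt V E C'"
    by blast
  then show "e \<le> pt V E C"
    using slowest min assms(1)
    by (simp add: pt_eq_prop_time min_zero_forcing_set_def)
qed

lemma tsm_solution_if_optimal: "finite V \<Longrightarrow> tsm_optimal V E T x y z \<Longrightarrow> tsm_solution V E T x y z"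
  by (simp add: tsm_solution_def tsm_optimal_def)

lemma tsm_optimal_lex_min:
  assumes "finite V" and "T = card V - 1" and opt: "tsm_optimal V E T x y z"
    and zfs: "zero_forcing_set V E C"
  shows "card {v \<in> V. x v 0 = 1} \<le> card C"
    and "card {v \<in> V. x v 0 = 1} = card C \<Longrightarrow> prop_time V E C \<le> prop_time V E {v \<in> V. x v 0 = 1}"
proof -
  interpret tsm_solution V E T x y z
    using assms(1) opt by (rule tsm_solution_if_optimal)
  have C_V: "C \<subseteq> V"
    using zfs by (simp add: zero_forcing_set_def)
  have time_C: "prop_time V E C \<le> T"
    using prop_time_le_card_minus_1[OF finite_V zfs] assms(2) by simp
  then have "stage V E C T = V"
    using stage_eq_iff_prop_time_le[OF finite_V zfs] by blast
  then have "tsm_objective V T x z \<le> tsm_objective V T (stage_x V E C) (stage_z V E C)"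
    using opt tsm_feasible_stage[OF finite_V C_V] unfolding tsm_optimal_def by blast
  also have "\<dots> = real (card C) - 1 / (2 * real T) * real (prop_time V E C)"
    using tsm_objective_eq[OF finite_V zfs time_C] by (simp add: stage_x_def stage_z_def)
  finally show "card initial_set \<le> card C"
    and "card initial_set = card C \<Longrightarrow> prop_time V E C \<le> prop_time V E initial_set"
    using lex_le_of_objective_le[OF prop_time_initial_set_le time_C] objective_eq by simp_all
qed

theorem corollary4p6:
  fixes V :: "'a set" and E :: "'a \<Rightarrow> 'a \<Rightarrow> bool"
    and x :: "'a \<Rightarrow> nat \<Rightarrow> real" and y :: "'a \<times> 'a \<Rightarrow> nat \<Rightarrow> real" and z :: "nat \<Rightarrow> real"
  assumes "simple_graph V E"
    and "T = card V - 1"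
    and "tsm_optimal V E T x y z"
  shows "min_zero_forcing_set V E {v \<in> V. x v 0 = 1} \<and>
         (\<exists>k::nat. PT V E = enat k \<and> pt V E {v \<in> V. x v 0 = 1} = enat k \<and>
                   real k = (\<Sum>t \<in> {1..T}. z t))"
proof -
  have finite: "finite V"
    using assms(1) by (simp add: simple_graph_def)
  interpret tsm_solution V E T x y z
    using finite assms(3) by (rule tsm_solution_if_optimal)
  note lex_min = tsm_optimal_lex_min[OF finite assms(2,3)]
  have min: "min_zero_forcing_set V E initial_set"
    using zero_forcing_initial_set lex_min(1) by (simp add: min_zero_forcing_set_def)
  have "PT V E = pt V E initial_set"
  proof (rule PT_eq_pt_if_slowest[OF finite min])
    fix C assume "min_zero_forcing_set V E C"
    then show "prop_time V E C \<le> prop_time V E initial_set"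
      using min lex_min by (simp add: min_zero_forcing_set_def le_antisym)
  qed
  then show ?thesis
    using min pt_eq_prop_time[OF finite zero_forcing_initial_set] sum_z_eq_prop_time by simp
qed

end
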